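(* Let $n\ge 2$ and $q\ge 2$ be integers, $E_q=\{0,1,\dots,q-1\}$, and let $A\subseteq E_q^n$ be a subset such that $q$ divides $|A|$ and $A$ has uniform column distribution, i.e. for every coordinate $i$ at which the elements of $A$ do not all agree, each value $b\in E_q$ occurs as the $i$-th coordinate of exactly $|A|/q$ elements of $A$. Then $A$ is metrically dense: $R(A)\le R(B)$ for every subset $B\subseteq E_q^n$ that is isometric to $A$.
   Context: $E_q^n$ is the set of all $n$-tuples over $E_q$ with Hamming distance $d_H(x,y)=|\{i: x_i\neq y_i\}|$. For $A\subseteq E_q^n$, $R(A)$ is the number of coordinates $i$ such that the $i$-th coordinates of the elements of $A$ are not all equal (the number of non-constant columns of the matrix whose rows are the elements of $A$). Two subsets $A,B\subseteq E_q^n$ are isometric if there is a bijection $\phi:A\to B$ with $d_H(\phi(x),\phi(y))=d_H(x,y)$ for all $x,y\in A$. *)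

theory Defs
  imports Main
begin

definition Eqn :: "nat \<Rightarrow> nat \<Rightarrow> nat list set" where
  "Eqn q n = {x. length x = n \<and> set x \<subseteq> {0..<q}}"

definition hamming :: "nat list \<Rightarrow> nat list \<Rightarrow> nat" where
  "hamming x y = card {i. i < length x \<and> x ! i \<noteq> y ! i}"

definition R :: "nat \<Rightarrow> nat list set \<Rightarrow> nat" where
  "R n A = card {i. i < n \<and> (\<exists>x\<in>A. \<exists>y\<in>A. x ! i \<noteq> y ! i)}"

definition isometric :: "nat list set \<Rightarrow> nat list set \<Rightarrow> bool" where
  "isometric A B \<longleftrightarrow> (\<exists>\<phi>. bij_betw \<phi> A B \<and>
      (\<forall>x\<in>A. \<forall>y\<in>A. hamming (\<phi> x) (\<phi> y) = hamming x y))"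

definition metrically_dense :: "nat \<Rightarrow> nat \<Rightarrow> nat list set \<Rightarrow> bool" where
  "metrically_dense q n A \<longleftrightarrow>
     (\<forall>B. B \<subseteq> Eqn q n \<and> isometric A B \<longrightarrow> R n A \<le> R n B)"

end

theory Submission
  imports Defs "HOL-Analysis.Convex"
begin

text \<open>The sum of all pairwise Hamming distances of a code is an isometry invariant, and it splits
into one term per non-constant column: the number of ordered pairs of words that disagree there.
If the symbols of a column occur with frequencies c_v, this number is |A|^2 - sum_v c_v^2, which
by the quadratic mean inequality is at most (1 - 1/q) |A|^2, with equality when all q symbols are
equally frequent. Every non-constant column of A attains this maximum, so a code isometric to A,
having the same total, needs at least as many non-constant columns.\<close>

lemma card_eq_sum_card_fibres:
  assumes "finite A" "finite V" "f ` A \<subseteq> V"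
  shows "card A = (\<Sum>v\<in>V. card {x\<in>A. f x = v})"
  using sum.group[OF assms, of "\<lambda>_. 1::nat"] by simp

lemma square_card_eq_card_disagreeing_pairs_add:
  assumes "finite A" "finite V" "f ` A \<subseteq> V"
  shows "card A ^ 2 = card {(x, y) \<in> A \<times> A. f x \<noteq> f y} + (\<Sum>v\<in>V. card {x\<in>A. f x = v} ^ 2)"
proof -
  let ?fibre = "\<lambda>v. {x\<in>A. f x = v}"
  let ?disagree = "{(x, y) \<in> A \<times> A. f x \<noteq> f y}" and ?agree = "{(x, y) \<in> A \<times> A. f x = f y}"
  have "finite ?disagree" "finite ?agree"
    using assms(1) by (auto intro: finite_subset[of _ "A \<times> A"])
  then have "card (?disagree \<union> ?agree) = card ?disagree + card ?agree"
    by (intro card_Un_disjoint) auto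
  moreover have "?disagree \<union> ?agree = A \<times> A"
    by blast
  ultimately have "card A ^ 2 = card ?disagree + card ?agree"
    by (simp add: card_cartesian_product power2_eq_square)
  also have "?agree = (\<Union>v\<in>V. ?fibre v \<times> ?fibre v)"
    using assms(3) by auto
  also have "card \<dots> = (\<Sum>v\<in>V. card (?fibre v) ^ 2)"
    using assms(1,2) by (subst card_UN_disjoint) (auto simp: card_cartesian_product power2_eq_square)
  finally show ?thesis .
qed

lemma card_mult_card_disagreeing_pairs_le:
  assumes "finite A" "finite V" "f ` A \<subseteq> V"
  shows "card V * card {(x, y) \<in> A \<times> A. f x \<noteq> f y} \<le> (card V - 1) * card A ^ 2"
proof -
  let ?c = "\<lambda>v. card {x\<in>A. f x = v}"
  have "real ((\<Sum>v\<in>V. ?c v) ^ 2) \<le> real (card V * (\<Sum>v\<in>V. ?c v ^ 2))"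
    using sum_squared_le_sum_of_squares[of "\<lambda>v. real (?c v)" V] by (simp add: mult.commute)
  then have "card A ^ 2 \<le> card V * (\<Sum>v\<in>V. ?c v ^ 2)"
    using card_eq_sum_card_fibres[OF assms] by (simp only: of_nat_le_iff)
  moreover have "card V * card A ^ 2 = card V * card {(x, y) \<in> A \<times> A. f x \<noteq> f y} + card V * (\<Sum>v\<in>V. ?c v ^ 2)"
    using square_card_eq_card_disagreeing_pairs_add[OF assms] by (simp add: algebra_simps)
  ultimately show ?thesis
    by (simp add: diff_mult_distrib)
qed

lemma card_mult_card_disagreeing_pairs_eq_if_uniform:
  assumes "finite A" "finite V" "f ` A \<subseteq> V" and uniform: "\<forall>v\<in>V. card {x\<in>A. f x = v} = k"
  shows "card V * card {(x, y) \<in> A \<times> A. f x \<noteq> f y} = (card V - 1) * card A ^ 2"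
proof -
  let ?D = "card {(x, y) \<in> A \<times> A. f x \<noteq> f y}"
  have "card A = card V * k"
    using card_eq_sum_card_fibres[OF assms(1-3)] uniform by simp
  moreover have "card A ^ 2 = ?D + card V * k ^ 2"
    using square_card_eq_card_disagreeing_pairs_add[OF assms(1-3)] uniform by simp
  ultimately have "card V * card A ^ 2 = card V * ?D + card A ^ 2"
    by (simp add: power2_eq_square algebra_simps)
  then show ?thesis
    by (simp add: diff_mult_distrib)
qed

definition non_constant_columns :: "nat \<Rightarrow> nat list set \<Rightarrow> nat set" where
  "non_constant_columns n A = {i. i < n \<and> (\<exists>x\<in>A. \<exists>y\<in>A. x ! i \<noteq> y ! i)}"

definition total_hamming :: "nat list set \<Rightarrow> nat" where
  "total_hamming A = (\<Sum>(x, y)\<in>A \<times> A. hamming x y)"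

lemma R_eq_card_non_constant_columns: "R n A = card (non_constant_columns n A)"
  by (simp add: R_def non_constant_columns_def)

lemma finite_Eqn: "finite (Eqn q n)"
proof -
  have "Eqn q n = {xs. set xs \<subseteq> {0..<q} \<and> length xs = n}"
    by (auto simp: Eqn_def)
  then show ?thesis
    using finite_lists_length_eq[of "{0..<q}" n] by simp
qed

lemma length_Eqn: "x \<in> Eqn q n \<Longrightarrow> length x = n"
  by (simp add: Eqn_def)

lemma Eqn_nth_less: "x \<in> Eqn q n \<Longrightarrow> i < n \<Longrightarrow> x ! i < q"
  by (auto simp: Eqn_def dest!: nth_mem)

lemma isometric_total_hamming_eq:
  assumes "isometric A B"
  shows "total_hamming B = total_hamming A"
proof -
  obtain \<phi> where bij: "bij_betw \<phi> A B"
    and isom: "\<forall>x\<in>A. \<forall>y\<in>A. hamming (\<phi> x) (\<phi> y) = hamming x y"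
    using assms by (auto simp: isometric_def)
  have "total_hamming B = (\<Sum>(x, y)\<in>A \<times> A. hamming (\<phi> x) (\<phi> y))"
    unfolding total_hamming_def
    using sum.reindex_bij_betw[OF bij_betw_map_prod[OF bij bij], of "\<lambda>(x, y). hamming x y"]
    by (simp add: case_prod_map_prod)
  also have "\<dots> = total_hamming A"
    unfolding total_hamming_def using isom by (intro sum.cong) auto
  finally show ?thesis .
qed

lemma hamming_eq_sum_columns:
  "length x = n \<Longrightarrow> hamming x y = (\<Sum>i<n. of_bool (x ! i \<noteq> y ! i))"
  by (simp add: hamming_def lessThan_def Collect_conj_eq)

lemma total_hamming_eq_sum_non_constant_columns:
  assumes "finite A" "\<forall>x\<in>A. length x = n"
  shows "total_hamming A = (\<Sum>i\<in>non_constant_columns n A. card {(x, y) \<in> A \<times> A. x ! i \<noteq> y ! i})"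
proof -
  have "total_hamming A = (\<Sum>(x, y)\<in>A \<times> A. \<Sum>i<n. of_bool (x ! i \<noteq> y ! i))"
    unfolding total_hamming_def using assms(2) by (intro sum.cong) (auto simp: hamming_eq_sum_columns)
  also have "\<dots> = (\<Sum>i<n. \<Sum>(x, y)\<in>A \<times> A. of_bool (x ! i \<noteq> y ! i))"
    unfolding case_prod_unfold by (rule sum.swap)
  also have "\<dots> = (\<Sum>i<n. card {(x, y) \<in> A \<times> A. x ! i \<noteq> y ! i})"
    using assms(1) by (simp add: case_prod_unfold Int_def mem_Times_iff)
  also have "\<dots> = (\<Sum>i\<in>non_constant_columns n A. card {(x, y) \<in> A \<times> A. x ! i \<noteq> y ! i})"
  proof (rule sum.mono_neutral_right)
    show "\<forall>i\<in>{..<n} - non_constant_columns n A. card {(x, y) \<in> A \<times> A. x ! i \<noteq> y ! i} = 0"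
    proof
      fix i assume "i \<in> {..<n} - non_constant_columns n A"
      then have "{(x, y) \<in> A \<times> A. x ! i \<noteq> y ! i} = {}"
        unfolding non_constant_columns_def by blast
      then show "card {(x, y) \<in> A \<times> A. x ! i \<noteq> y ! i} = 0"
        by (simp only: card.empty)
    qed
  qed (auto simp: non_constant_columns_def)
  finally show ?thesis .
qed

lemma card_mult_total_hamming_le:
  assumes "B \<subseteq> Eqn q n"
  shows "q * total_hamming B \<le> R n B * ((q - 1) * card B ^ 2)"
proof -
  have finite: "finite B"
    using finite_subset[OF assms(1) finite_Eqn] .
  have lengths: "\<forall>x\<in>B. length x = n"
    using assms(1) length_Eqn by blast
  have "q * total_hamming B = (\<Sum>i\<in>non_constant_columns n B. q * card {(x, y) \<in> B \<times> B. x ! i \<noteq> y ! i})"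
    by (simp add: total_hamming_eq_sum_non_constant_columns[OF finite lengths] sum_distrib_left)
  also have "\<dots> \<le> (\<Sum>i\<in>non_constant_columns n B. (q - 1) * card B ^ 2)"
  proof (rule sum_mono)
    fix i assume "i \<in> non_constant_columns n B"
    then have "(\<lambda>x. x ! i) ` B \<subseteq> {..<q}"
      using assms by (auto simp: non_constant_columns_def intro: Eqn_nth_less)
    then have "card {..<q} * card {(x, y) \<in> B \<times> B. x ! i \<noteq> y ! i} \<le> (card {..<q} - 1) * card B ^ 2"
      by (rule card_mult_card_disagreeing_pairs_le[OF finite finite_lessThan])
    then show "q * card {(x, y) \<in> B \<times> B. x ! i \<noteq> y ! i} \<le> (q - 1) * card B ^ 2"
      by simp
  qed
  also have "\<dots> = R n B * ((q - 1) * card B ^ 2)"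
    by (simp add: R_eq_card_non_constant_columns)
  finally show ?thesis .
qed

lemma card_mult_total_hamming_eq_if_uniform:
  assumes "A \<subseteq> Eqn q n"
    and uniform: "\<forall>i\<in>non_constant_columns n A. \<forall>b<q. card {x\<in>A. x ! i = b} = k"
  shows "q * total_hamming A = R n A * ((q - 1) * card A ^ 2)"
proof -
  have finite: "finite A"
    using finite_subset[OF assms(1) finite_Eqn] .
  have lengths: "\<forall>x\<in>A. length x = n"
    using assms(1) length_Eqn by blast
  have "q * total_hamming A = (\<Sum>i\<in>non_constant_columns n A. q * card {(x, y) \<in> A \<times> A. x ! i \<noteq> y ! i})"
    by (simp add: total_hamming_eq_sum_non_constant_columns[OF finite lengths] sum_distrib_left)
  also have "\<dots> = (\<Sum>i\<in>non_constant_columns n A. (q - 1) * card A ^ 2)"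
  proof (rule sum.cong[OF refl])
    fix i assume i: "i \<in> non_constant_columns n A"
    then have "(\<lambda>x. x ! i) ` A \<subseteq> {..<q}"
      using assms(1) by (auto simp: non_constant_columns_def intro: Eqn_nth_less)
    moreover have "\<forall>b\<in>{..<q}. card {x\<in>A. x ! i = b} = k"
      using uniform i by simp
    ultimately have "card {..<q} * card {(x, y) \<in> A \<times> A. x ! i \<noteq> y ! i} = (card {..<q} - 1) * card A ^ 2"
      by (rule card_mult_card_disagreeing_pairs_eq_if_uniform[OF finite finite_lessThan])
    then show "q * card {(x, y) \<in> A \<times> A. x ! i \<noteq> y ! i} = (q - 1) * card A ^ 2"
      by simp
  qed
  also have "\<dots> = R n A * ((q - 1) * card A ^ 2)"
    by (simp add: R_eq_card_non_constant_columns)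
  finally show ?thesis .
qed

theorem mainTheorem2:
  fixes n q :: nat and A :: "nat list set"
  assumes "n \<ge> 2" and "q \<ge> 2"
    and "A \<subseteq> Eqn q n"
    and "q dvd card A"
    and "\<forall>i<n. (\<exists>x\<in>A. \<exists>y\<in>A. x ! i \<noteq> y ! i) \<longrightarrow>
           (\<forall>b<q. card {x\<in>A. x ! i = b} = card A div q)"
  shows "metrically_dense q n A"
  unfolding metrically_dense_def
proof (intro allI impI, elim conjE)
  fix B assume B: "B \<subseteq> Eqn q n" and "isometric A B"
  then have same_total: "total_hamming B = total_hamming A" and same_card: "card B = card A"
    by (auto simp: isometric_total_hamming_eq isometric_def bij_betw_same_card)
  have "R n A * ((q - 1) * card A ^ 2) = q * total_hamming A"
    using card_mult_total_hamming_eq_if_uniform[OF assms(3), of "card A div q"] assms(5)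
    by (auto simp: non_constant_columns_def)
  also have "\<dots> \<le> R n B * ((q - 1) * card A ^ 2)"
    using card_mult_total_hamming_le[OF B] same_total same_card by simp
  finally have "R n A * ((q - 1) * card A ^ 2) \<le> R n B * ((q - 1) * card A ^ 2)" .
  moreover have "finite A"
    using finite_subset[OF assms(3) finite_Eqn] .
  ultimately show "R n A \<le> R n B"
    using \<open>q \<ge> 2\<close> by (cases "A = {}") (auto simp: R_def)
qed

end
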